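(* Let $\mathcal{A}$ be a dual Banach algebra and let $\varphi$ be a weak$^*$-continuous character on $\mathcal{A}$. If $\mathcal{A}$ is Johnson pseudo-Connes amenable, then $\mathcal{A}$ is $\varphi$-Connes amenable.
   Context: A dual Banach algebra is a Banach algebra $\mathcal{A}$ together with a closed $\mathcal{A}$-submodule $\mathcal{A}_*$ of $\mathcal{A}^*$ such that $\mathcal{A}=(\mathcal{A}_* )^*$. For a bimodule $E$, $\sigma wc(E)$ is the set of $x\in E$ for which $a\mapsto a\cdot x$, $a\mapsto x\cdot a$ are weak$^*$-weak continuous. For a weak$^*$-continuous character $\varphi$, $\mathcal{A}$ is $\varphi$-Connes amenable if there is a bounded linear functional $m$ on $\sigma wc(\mathcal{A}^* )$ with $m(\varphi)=1$ and $m(f\cdot a)=\varphi(a)m(f)$ for all $a\in\mathcal{A}$, $f\in\sigma wc(\mathcal{A}^* )$. $\mathcal{A}\hat{\otimes}\mathcal{A}$ has actions $a\cdot(b\otimes c)=ab\otimes c$, $(b\otimes c)\cdot a=b\otimes ca$; duals carry the dual actions. $\pi_{\mathcal{A}}$ is the multiplication map $\mathcal{A}\hat{\otimes}\mathcal{A}\to\mathcal{A}$, $i_{\mathcal{A}_*}:\mathcal{A}_*\hookrightarrow\mathcal{A}^*$ the canonical embedding. $\mathcal{A}$ is Johnson pseudo-Connes amenable if there is a (not necessarily bounded) net $(m_\alpha)$ in $(\mathcal{A}\hat{\otimes}\mathcal{A})^{**}$ with $\langle T,a\cdot m_\alpha\rangle=\langle T,m_\alpha\cdot a\rangle$ for all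 $a\in\mathcal{A}$, $T\in\sigma wc((\mathcal{A}\hat{\otimes}\mathcal{A})^* )$, $\alpha$, and $i_{\mathcal{A}_*}^*\pi_{\mathcal{A}}^{**}(m_\alpha)a\to a$ for every $a\in\mathcal{A}$. *)

theory Defs
  imports "HOL-Analysis.Analysis"
begin

class complex_banach_algebra = real_normed_algebra + banach +
  fixes scaleC :: "complex \<Rightarrow> 'a \<Rightarrow> 'a"
  assumes scaleC_add_right: "scaleC c (x + y) = scaleC c x + scaleC c y"
    and scaleC_add_left: "scaleC (c + d) x = scaleC c x + scaleC d x"
    and scaleC_scaleC: "scaleC c (scaleC d x) = scaleC (c * d) x"
    and scaleC_one: "scaleC 1 x = x"
    and scaleC_of_real: "scaleC (complex_of_real r) x = scaleR r x"
    and norm_scaleC: "norm (scaleC c x) = cmod c * norm x"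
    and mult_scaleC_left: "scaleC c x * y = scaleC c (x * y)"
    and mult_scaleC_right: "x * scaleC c y = scaleC c (x * y)"

definition clinear_functional :: "('a::complex_banach_algebra \<Rightarrow> complex) \<Rightarrow> bool" where
  "clinear_functional f \<longleftrightarrow> (\<forall>x y. f (x + y) = f x + f y) \<and> (\<forall>c x. f (scaleC c x) = c * f x)"

definition dual_space :: "('a::complex_banach_algebra \<Rightarrow> complex) set" where
  "dual_space = {f. clinear_functional f \<and> (\<exists>K. \<forall>x. cmod (f x) \<le> K * norm x)}"

definition dual_norm :: "('a::complex_banach_algebra \<Rightarrow> complex) \<Rightarrow> real" where
  "dual_norm f = Sup {cmod (f x) | x. norm x \<le> 1}"

text \<open>Dual module actions on A^*:  <x, f.a> = <a.x, f>,  <x, a.f> = <x.a, f>.\<close>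

definition fact_r :: "('a::complex_banach_algebra \<Rightarrow> complex) \<Rightarrow> 'a \<Rightarrow> ('a \<Rightarrow> complex)" where
  "fact_r f a = (\<lambda>x. f (a * x))"

definition fact_l :: "'a::complex_banach_algebra \<Rightarrow> ('a \<Rightarrow> complex) \<Rightarrow> ('a \<Rightarrow> complex)" where
  "fact_l a f = (\<lambda>x. f (x * a))"

text \<open>Apre plays the role of the predual A_*: a norm-closed A-submodule of A^*
  such that the canonical map A -> (A_*)^*, a |-> (f |-> f a), is a surjective
  isometry.\<close>

definition dual_Banach_algebra :: "('a::complex_banach_algebra \<Rightarrow> complex) set \<Rightarrow> bool" where
  "dual_Banach_algebra Apre \<longleftrightarrow>
     Apre \<subseteq> dual_space
   \<and> (\<lambda>_. 0) \<in> Apre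
   \<and> (\<forall>f\<in>Apre. \<forall>g\<in>Apre. (\<lambda>x. f x + g x) \<in> Apre)
   \<and> (\<forall>f\<in>Apre. \<forall>c. (\<lambda>x. c * f x) \<in> Apre)
   \<and> (\<forall>f\<in>Apre. \<forall>a. fact_r f a \<in> Apre \<and> fact_l a f \<in> Apre)
   \<and> (\<forall>f\<in>dual_space. (\<forall>e>0. \<exists>g\<in>Apre. dual_norm (\<lambda>x. f x - g x) < e) \<longrightarrow> f \<in> Apre)
   \<and> (\<forall>a. norm a = Sup {cmod (f a) | f. f \<in> Apre \<and> dual_norm f \<le> 1})
   \<and> (\<forall>\<Phi> :: ('a \<Rightarrow> complex) \<Rightarrow> complex.
        ((\<forall>f\<in>Apre. \<forall>g\<in>Apre. \<Phi> (\<lambda>x. f x + g x) = \<Phi> f + \<Phi> g)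
         \<and> (\<forall>f\<in>Apre. \<forall>c. \<Phi> (\<lambda>x. c * f x) = c * \<Phi> f)
         \<and> (\<exists>K. \<forall>f\<in>Apre. cmod (\<Phi> f) \<le> K * dual_norm f))
        \<longrightarrow> (\<exists>a. \<forall>f\<in>Apre. \<Phi> f = f a))"

definition weak_topology_by :: "('b \<Rightarrow> complex) set \<Rightarrow> 'b topology" where
  "weak_topology_by F =
     topology_generated_by ({UNIV} \<union> {{x. \<Phi> x \<in> U} | \<Phi> U. \<Phi> \<in> F \<and> open U})"

abbreviation weak_star_top :: "('a::complex_banach_algebra \<Rightarrow> complex) set \<Rightarrow> 'a topology" where
  "weak_star_top Apre \<equiv> weak_topology_by Apre"

definition bidual_space :: "(('a::complex_banach_algebra \<Rightarrow> complex) \<Rightarrow> complex) set" where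
  "bidual_space = {\<Phi>.
      (\<forall>f\<in>dual_space. \<forall>g\<in>dual_space. \<Phi> (\<lambda>x. f x + g x) = \<Phi> f + \<Phi> g)
    \<and> (\<forall>f\<in>dual_space. \<forall>c. \<Phi> (\<lambda>x. c * f x) = c * \<Phi> f)
    \<and> (\<exists>K. \<forall>f\<in>dual_space. cmod (\<Phi> f) \<le> K * dual_norm f)}"

definition swc_dual :: "('a::complex_banach_algebra \<Rightarrow> complex) set \<Rightarrow> ('a \<Rightarrow> complex) set" where
  "swc_dual Apre = {f \<in> dual_space.
      continuous_map (weak_star_top Apre) (subtopology (weak_topology_by bidual_space) dual_space)
        (\<lambda>a. fact_l a f)
    \<and> continuous_map (weak_star_top Apre) (subtopology (weak_topology_by bidual_space) dual_space)
        (\<lambda>a. fact_r f a)}"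

text \<open>(A \<hat>\<otimes> A)^* is identified (isometrically) with the bounded complex bilinear
  forms on A x A, with norm sup over the product of unit balls.\<close>

definition bil_dual :: "('a::complex_banach_algebra \<Rightarrow> 'a \<Rightarrow> complex) set" where
  "bil_dual = {T. (\<forall>b. clinear_functional (\<lambda>c. T b c)) \<and> (\<forall>c. clinear_functional (\<lambda>b. T b c))
                 \<and> (\<exists>K. \<forall>b c. cmod (T b c) \<le> K * norm b * norm c)}"

definition bil_norm :: "('a::complex_banach_algebra \<Rightarrow> 'a \<Rightarrow> complex) \<Rightarrow> real" where
  "bil_norm T = Sup {cmod (T b c) | b c. norm b \<le> 1 \<and> norm c \<le> 1}"

text \<open>Dual actions on (A\<hat>\<otimes>A)^*, where a.(b\<otimes>c) = ab\<otimes>c and (b\<otimes>c).a = b\<otimes>ca: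
  (T.a)(b,c) = T(ab,c),  (a.T)(b,c) = T(b,ca).\<close>

definition tact_r :: "('a::complex_banach_algebra \<Rightarrow> 'a \<Rightarrow> complex) \<Rightarrow> 'a \<Rightarrow> ('a \<Rightarrow> 'a \<Rightarrow> complex)" where
  "tact_r T a = (\<lambda>b c. T (a * b) c)"

definition tact_l :: "'a::complex_banach_algebra \<Rightarrow> ('a \<Rightarrow> 'a \<Rightarrow> complex) \<Rightarrow> ('a \<Rightarrow> 'a \<Rightarrow> complex)" where
  "tact_l a T = (\<lambda>b c. T b (c * a))"

definition bil_bidual :: "(('a::complex_banach_algebra \<Rightarrow> 'a \<Rightarrow> complex) \<Rightarrow> complex) set" where
  "bil_bidual = {m.
      (\<forall>S\<in>bil_dual. \<forall>T\<in>bil_dual. m (\<lambda>b c. S b c + T b c) = m S + m T)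
    \<and> (\<forall>T\<in>bil_dual. \<forall>z. m (\<lambda>b c. z * T b c) = z * m T)
    \<and> (\<exists>K. \<forall>T\<in>bil_dual. cmod (m T) \<le> K * bil_norm T)}"

definition swc_bil_dual :: "('a::complex_banach_algebra \<Rightarrow> complex) set \<Rightarrow> ('a \<Rightarrow> 'a \<Rightarrow> complex) set" where
  "swc_bil_dual Apre = {T \<in> bil_dual.
      continuous_map (weak_star_top Apre) (subtopology (weak_topology_by bil_bidual) bil_dual)
        (\<lambda>a. tact_l a T)
    \<and> continuous_map (weak_star_top Apre) (subtopology (weak_topology_by bil_bidual) bil_dual)
        (\<lambda>a. tact_r T a)}"

text \<open>i_{A_*}^* \<pi>_A^{**}(m), viewed as an element of A = (A_*)^*: the unique x with
  f x = <\<pi>_A^* f, m> = m((b,c) |-> f(bc)) for all f in A_*.\<close>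

definition diag_image :: "('a::complex_banach_algebra \<Rightarrow> complex) set \<Rightarrow> (('a \<Rightarrow> 'a \<Rightarrow> complex) \<Rightarrow> complex) \<Rightarrow> 'a" where
  "diag_image Apre m = (THE x. \<forall>f\<in>Apre. f x = m (\<lambda>b c. f (b * c)))"

text \<open>A net (m_\<alpha>) in (A\<hat>\<otimes>A)^{**} is encoded
  as a proper filter F on (A\<hat>\<otimes>A)^{**} (nets and proper filters give the same
  notion of "there is a net such that ..."): eventually m is in the bidual and
  satisfies <T, a.m> = <T, m.a> for T in sigma wc, i.e. m(T.a) = m(a.T); and
  diag_image m * a \<rightarrow> a in norm for all a.\<close>

definition Johnson_pseudo_Connes_amenable :: "('a::complex_banach_algebra \<Rightarrow> complex) set \<Rightarrow> bool" where
  "Johnson_pseudo_Connes_amenable Apre \<longleftrightarrow>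
     (\<exists>F :: (('a \<Rightarrow> 'a \<Rightarrow> complex) \<Rightarrow> complex) filter.
        F \<noteq> bot
      \<and> (\<forall>\<^sub>F m in F. m \<in> bil_bidual
           \<and> (\<forall>a. \<forall>T\<in>swc_bil_dual Apre. m (tact_r T a) = m (tact_l a T)))
      \<and> (\<forall>a. ((\<lambda>m. diag_image Apre m * a) \<longlongrightarrow> a) F))"

definition character :: "('a::complex_banach_algebra \<Rightarrow> complex) \<Rightarrow> bool" where
  "character \<phi> \<longleftrightarrow> clinear_functional \<phi> \<and> (\<forall>a b. \<phi> (a * b) = \<phi> a * \<phi> b) \<and> (\<exists>a. \<phi> a \<noteq> 0)"

definition weak_star_continuous_character ::
    "('a::complex_banach_algebra \<Rightarrow> complex) set \<Rightarrow> ('a \<Rightarrow> complex) \<Rightarrow> bool" where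
  "weak_star_continuous_character Apre \<phi> \<longleftrightarrow>
     character \<phi> \<and> continuous_map (weak_star_top Apre) euclidean \<phi>"

definition phi_Connes_amenable ::
    "('a::complex_banach_algebra \<Rightarrow> complex) set \<Rightarrow> ('a \<Rightarrow> complex) \<Rightarrow> bool" where
  "phi_Connes_amenable Apre \<phi> \<longleftrightarrow>
     (\<exists>m :: ('a \<Rightarrow> complex) \<Rightarrow> complex.
        (\<forall>f\<in>swc_dual Apre. \<forall>g\<in>swc_dual Apre. m (\<lambda>x. f x + g x) = m f + m g)
      \<and> (\<forall>f\<in>swc_dual Apre. \<forall>c. m (\<lambda>x. c * f x) = c * m f)
      \<and> (\<exists>K. \<forall>f\<in>swc_dual Apre. cmod (m f) \<le> K * dual_norm f)
      \<and> m \<phi> = 1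
      \<and> (\<forall>a. \<forall>f\<in>swc_dual Apre. m (fact_r f a) = \<phi> a * m f))"

end

theory Submission
  imports Defs
begin

(* A weak* continuous functional vanishes on the common kernel of finitely many elements of the
   predual, hence is a linear combination of them; so the character \<phi> lies in the predual and
   can be tested against the net (m\<^sub>\<alpha>), with \<phi> \<circ> \<pi> = \<phi> \<otimes> \<phi>. Since
   \<phi>(\<pi>(m\<^sub>\<alpha>)) \<phi>(a) = \<phi>(\<pi>(m\<^sub>\<alpha>) a) \<longrightarrow> \<phi>(a), some m = m\<^sub>\<alpha> has m(\<phi> \<otimes> \<phi>) \<noteq> 0,
   and f \<mapsto> m(f \<otimes> \<phi>) / m(\<phi> \<otimes> \<phi>) is the required mean: a.(f \<otimes> \<phi>) = \<phi>(a) (f \<otimes> \<phi>)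
   and (f \<otimes> \<phi>).a = (f.a) \<otimes> \<phi>, so f \<otimes> \<phi> is again \<sigma>wc, and the diagonal property
   of m turns these identities into m((f.a) \<otimes> \<phi>) = \<phi>(a) m(f \<otimes> \<phi>). *)

lemma clinear_functional_linear: "clinear_functional f \<Longrightarrow> linear f"
  unfolding clinear_functional_def linear_iff by (metis scaleC_of_real scaleR_conv_of_real)

lemma clinear_functional_scaleC: "clinear_functional f \<Longrightarrow> f (scaleC c x) = c * f x"
  by (simp add: clinear_functional_def)

lemma dual_space_bounded_linear:
  assumes "f \<in> dual_space" shows "bounded_linear f"
proof -
  obtain K where K: "\<And>x. cmod (f x) \<le> K * norm x"
    using assms by (auto simp: dual_space_def)
  have "linear f"
    using assms by (simp add: dual_space_def clinear_functional_linear)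
  then show ?thesis
    using K by (auto simp: bounded_linear_def bounded_linear_axioms_def mult.commute)
qed

lemma dual_norm_upper:
  assumes "f \<in> dual_space" "norm x \<le> 1" shows "cmod (f x) \<le> dual_norm f"
proof -
  obtain K where K: "K > 0" "\<And>x. cmod (f x) \<le> norm x * K"
    using bounded_linear.pos_bounded[OF dual_space_bounded_linear[OF assms(1)]] by blast
  have "cmod (f y) \<le> K" if "norm y \<le> 1" for y
    using K(2)[of y] mult_right_mono[OF that less_imp_le[OF K(1)]] by simp
  then have "bdd_above {cmod (f y) | y. norm y \<le> 1}"
    by (intro bdd_aboveI) auto
  then show ?thesis
    unfolding dual_norm_def using assms(2) by (blast intro: cSup_upper)
qed

lemma dual_norm_nonneg: "f \<in> dual_space \<Longrightarrow> 0 \<le> dual_norm f"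
  by (rule order_trans[OF norm_ge_zero dual_norm_upper[of f 0]]) simp_all

section \<open>Weak topologies\<close>

lemma topspace_weak_topology_by [simp]: "topspace (weak_topology_by F) = UNIV"
  unfolding weak_topology_by_def topology_generated_by_topspace by auto

lemma continuous_map_weak_topology_by_eval:
  assumes "\<Phi> \<in> F" shows "continuous_map (weak_topology_by F) euclidean \<Phi>"
proof (rule continuous_map_openin_preimage_eq[THEN iffD2], intro conjI allI impI)
  fix U :: "complex set" assume "openin euclidean U"
  with assms have "\<Phi> -` U \<in> {UNIV} \<union> {{x. \<Phi> x \<in> U} | \<Phi> U. \<Phi> \<in> F \<and> open U}"
    unfolding vimage_def by auto
  then show "openin (weak_topology_by F) (topspace (weak_topology_by F) \<inter> \<Phi> -` U)"
    unfolding weak_topology_by_def by (simp add: topology_generated_by_Basis)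
qed simp

lemma continuous_map_weak_topology_by_iff:
  "continuous_map X (weak_topology_by F) g \<longleftrightarrow> (\<forall>\<Phi>\<in>F. continuous_map X euclidean (\<lambda>x. \<Phi> (g x)))"
  (is "?lhs \<longleftrightarrow> ?rhs")
proof
  show "?lhs \<Longrightarrow> ?rhs"
    using continuous_map_compose continuous_map_weak_topology_by_eval unfolding o_def by blast
next
  assume ?rhs
  show ?lhs
    unfolding weak_topology_by_def
  proof (rule continuous_on_generated_topo)
    fix U assume "U \<in> {UNIV} \<union> {{x. \<Phi> x \<in> U} | \<Phi> U. \<Phi> \<in> F \<and> open U}"
    then consider "U = UNIV" | \<Phi> V where "U = {x. \<Phi> x \<in> V}" "\<Phi> \<in> F" "open V"
      by blast
    then show "openin X (g -` U \<inter> topspace X)"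
    proof cases
      case (2 \<Phi> V)
      then have "openin X {x \<in> topspace X. \<Phi> (g x) \<in> V}"
        using \<open>?rhs\<close> by (simp add: continuous_map_def)
      moreover have "g -` U \<inter> topspace X = {x \<in> topspace X. \<Phi> (g x) \<in> V}"
        using 2 by auto
      ultimately show ?thesis by simp
    qed simp
  qed auto
qed

lemma weak_topology_by_openin_nhd:
  assumes "openin (weak_topology_by F) U" "x \<in> U"
  obtains G e where "finite G" "G \<subseteq> F" "e > 0" "\<And>y. \<forall>f\<in>G. cmod (f y - f x) < e \<Longrightarrow> y \<in> U"
proof -
  have "generate_topology_on ({UNIV} \<union> {{x. \<Phi> x \<in> U} | \<Phi> U. \<Phi> \<in> F \<and> open U}) U"
    using assms(1) unfolding weak_topology_by_def by (rule openin_topology_generated_by)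
  then have "\<exists>G e. finite G \<and> G \<subseteq> F \<and> e > 0 \<and> (\<forall>y. (\<forall>f\<in>G. cmod (f y - f x) < e) \<longrightarrow> y \<in> U)"
    using assms(2)
  proof (induction arbitrary: x)
    case Empty
    then show ?case by simp
  next
    case (Int a b)
    obtain G1 e1 where 1: "finite G1" "G1 \<subseteq> F" "e1 > 0"
      "\<forall>y. (\<forall>f\<in>G1. cmod (f y - f x) < e1) \<longrightarrow> y \<in> a"
      using Int.IH(1)[of x] Int.prems by blast
    obtain G2 e2 where 2: "finite G2" "G2 \<subseteq> F" "e2 > 0"
      "\<forall>y. (\<forall>f\<in>G2. cmod (f y - f x) < e2) \<longrightarrow> y \<in> b"
      using Int.IH(2)[of x] Int.prems by blast
    have "\<forall>y. (\<forall>f\<in>G1 \<union> G2. cmod (f y - f x) < min e1 e2) \<longrightarrow> y \<in> a \<inter> b"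
      using 1(4) 2(4) by auto
    then show ?case
      using 1 2 by (intro exI[of _ "G1 \<union> G2"] exI[of _ "min e1 e2"]) simp
  next
    case (UN K)
    then obtain k where "k \<in> K" "x \<in> k"
      by blast
    then show ?case
      using UN.IH[of k x] by blast
  next
    case (Basis s)
    then consider "s = UNIV" | \<Phi> V where "s = {x. \<Phi> x \<in> V}" "\<Phi> \<in> F" "open V"
      by blast
    then show ?case
    proof cases
      case 1
      then show ?thesis by (intro exI[of _ "{}"] exI[of _ 1]) simp
    next
      case (2 \<Phi> V)
      then obtain e where e: "e > 0" "ball (\<Phi> x) e \<subseteq> V"
        using Basis.prems 2(1,3) open_contains_ball_eq by blast
      have "\<forall>y. cmod (\<Phi> y - \<Phi> x) < e \<longrightarrow> y \<in> s"
        using 2(1) e(2) by (auto simp: dist_norm norm_minus_commute)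
      then show ?thesis
        using 2(2) e(1) by (intro exI[of _ "{\<Phi>}"] exI[of _ e]) simp
    qed
  qed
  then show thesis
    using that by blast
qed

section \<open>Weak* continuous functionals\<close>

lemma linear_combination_of_common_kernel:
  assumes "finite G" "\<forall>g\<in>G. clinear_functional g" "clinear_functional \<psi>"
    "\<And>y. \<forall>g\<in>G. g y = 0 \<Longrightarrow> \<psi> y = 0"
  shows "\<exists>c. \<psi> = (\<lambda>x. \<Sum>g\<in>G. c g * g x)"
  using assms
proof (induction G arbitrary: \<psi> rule: finite_induct)
  case empty
  then show ?case by auto
next
  case (insert g G)
  have lin: "linear \<psi>" "linear g" "\<forall>f\<in>G. linear f"
    using insert.prems clinear_functional_linear by auto
  obtain t where t: "\<And>y. \<forall>f\<in>G. f y = 0 \<Longrightarrow> \<psi> y = t * g y"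
  proof (cases "\<exists>y0. (\<forall>f\<in>G. f y0 = 0) \<and> g y0 \<noteq> 0")
    case True
    then obtain y0 where y0: "\<forall>f\<in>G. f y0 = 0" "g y0 \<noteq> 0" by blast
    show thesis
    proof (rule that[of "\<psi> y0 / g y0"])
      fix y assume y: "\<forall>f\<in>G. f y = 0"
      define z where "z = y - scaleC (g y / g y0) y0"
      have "\<forall>f\<in>insert g G. f z = 0"
        using insert.prems y y0 lin by (auto simp: z_def linear_diff clinear_functional_scaleC)
      then have "\<psi> z = 0"
        using insert.prems(3) by blast
      moreover have "\<psi> z = \<psi> y - g y / g y0 * \<psi> y0"
        using insert.prems(2) lin(1) by (simp add: z_def linear_diff clinear_functional_scaleC)
      ultimately show "\<psi> y = \<psi> y0 / g y0 * g y"
        by simp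
    qed
  next
    case False
    then show thesis
      using that[of 0] insert.prems(3) by auto
  qed
  have "clinear_functional (\<lambda>x. \<psi> x - t * g x)"
    using insert.prems by (auto simp: clinear_functional_def algebra_simps)
  moreover have "\<psi> y - t * g y = 0" if "\<forall>f\<in>G. f y = 0" for y
    using t[OF that] by simp
  ultimately obtain c where c: "(\<lambda>x. \<psi> x - t * g x) = (\<lambda>x. \<Sum>f\<in>G. c f * f x)"
    using insert.IH insert.prems(1) by blast
  have "(\<Sum>f\<in>G. (c(g := t)) f * f x) = (\<Sum>f\<in>G. c f * f x)" for x
    using insert.hyps(2) by (intro sum.cong) auto
  then have "\<psi> x = (\<Sum>f\<in>insert g G. (c(g := t)) f * f x)" for x
    using fun_cong[OF c, of x] insert.hyps by (simp add: diff_eq_eq)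
  then show ?case by blast
qed

lemma dual_Banach_algebraD:
  assumes "dual_Banach_algebra Apre"
  shows dual_Banach_algebra_subset: "Apre \<subseteq> dual_space"
    and dual_Banach_algebra_zero: "(\<lambda>_. 0) \<in> Apre"
    and dual_Banach_algebra_add: "f \<in> Apre \<Longrightarrow> g \<in> Apre \<Longrightarrow> (\<lambda>x. f x + g x) \<in> Apre"
    and dual_Banach_algebra_scale: "f \<in> Apre \<Longrightarrow> (\<lambda>x. c * f x) \<in> Apre"
    and dual_Banach_algebra_norm: "norm a = Sup {cmod (f a) | f. f \<in> Apre \<and> dual_norm f \<le> 1}"
  using assms unfolding dual_Banach_algebra_def by blast+

lemma predual_linear_combination_mem:
  assumes "dual_Banach_algebra Apre" "finite G" "G \<subseteq> Apre"
  shows "(\<lambda>x. \<Sum>g\<in>G. c g * g x) \<in> Apre"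
  using assms(2,3)
proof (induction G rule: finite_induct)
  case empty
  then show ?case
    using dual_Banach_algebra_zero[OF assms(1)] by simp
next
  case (insert g G)
  then show ?case
    using dual_Banach_algebra_add[OF assms(1) dual_Banach_algebra_scale[OF assms(1)]] by simp
qed

lemma weak_star_continuous_functional_mem_predual:
  assumes D: "dual_Banach_algebra Apre" and lin: "clinear_functional \<psi>"
    and cont: "continuous_map (weak_star_top Apre) euclidean \<psi>"
  shows "\<psi> \<in> Apre"
proof -
  have "openin (weak_star_top Apre) {x. \<psi> x \<in> ball 0 1}"
    using openin_continuous_map_preimage[OF cont, of "ball 0 1"] by simp
  moreover have "0 \<in> {x. \<psi> x \<in> ball 0 1}"
    using lin by (simp add: clinear_functional_linear linear_0)
  ultimately obtain G e where G: "finite G" "G \<subseteq> Apre" "e > 0"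
    and small: "\<And>y. \<forall>f\<in>G. cmod (f y - f 0) < e \<Longrightarrow> y \<in> {x. \<psi> x \<in> ball 0 1}"
    by (rule weak_topology_by_openin_nhd) simp_all
  have linG: "\<forall>g\<in>G. clinear_functional g"
    using G(2) dual_Banach_algebra_subset[OF D] by (auto simp: dual_space_def)
  have "\<psi> y = 0" if y: "\<forall>g\<in>G. g y = 0" for y
  proof (rule ccontr)
    assume "\<psi> y \<noteq> 0"
    \<comment> \<open>the common kernel is a subspace on which \<psi> stays below 1, so \<psi> vanishes there\<close>
    define t where "t = 2 / cmod (\<psi> y)"
    have "scaleR t y \<in> {x. \<psi> x \<in> ball 0 1}"
      using y linG G(3)
      by (intro small) (auto simp: clinear_functional_linear linear_0 linear_scale)
    then have "cmod (\<psi> (scaleR t y)) < 1"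
      by simp
    moreover have "cmod (\<psi> (scaleR t y)) = 2"
      using \<open>\<psi> y \<noteq> 0\<close> lin by (simp add: t_def clinear_functional_linear linear_scale)
    ultimately show False by simp
  qed
  then obtain c where "\<psi> = (\<lambda>x. \<Sum>g\<in>G. c g * g x)"
    using linear_combination_of_common_kernel[OF G(1) linG lin] by blast
  then show ?thesis
    using predual_linear_combination_mem[OF D G(1,2)] by simp
qed

section \<open>Bounded bilinear forms\<close>

definition tensor_form :: "('a \<Rightarrow> complex) \<Rightarrow> ('a \<Rightarrow> complex) \<Rightarrow> 'a \<Rightarrow> 'a \<Rightarrow> complex" where
  "tensor_form f g = (\<lambda>b c. f b * g c)"

lemma bil_dualI:
  assumes "\<And>b. clinear_functional (\<lambda>c. T b c)" "\<And>c. clinear_functional (\<lambda>b. T b c)"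
    and "\<And>b c. cmod (T b c) \<le> K * norm b * norm c"
  shows "T \<in> bil_dual"
  using assms unfolding bil_dual_def by blast

lemma bil_norm_upper:
  assumes "T \<in> bil_dual" "norm b \<le> 1" "norm c \<le> 1"
  shows "cmod (T b c) \<le> bil_norm T"
proof -
  obtain K where K: "\<And>b c. cmod (T b c) \<le> K * norm b * norm c"
    using assms(1) by (auto simp: bil_dual_def)
  have "cmod (T b c) \<le> \<bar>K\<bar>" if "norm b \<le> 1" "norm c \<le> 1" for b c
  proof -
    have "K * norm b * norm c \<le> \<bar>K\<bar> * (norm b * norm c)"
      by (simp add: mult.assoc mult_right_mono)
    also have "\<dots> \<le> \<bar>K\<bar>"
      using that by (simp add: mult_le_one mult_left_le)
    finally show ?thesis using K[of b c] by simp
  qed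
  then have "bdd_above {cmod (T b c) | b c. norm b \<le> 1 \<and> norm c \<le> 1}"
    by (intro bdd_aboveI) auto
  then show ?thesis
    unfolding bil_norm_def using assms(2,3) by (blast intro: cSup_upper)
qed

lemma bil_norm_nonneg: "T \<in> bil_dual \<Longrightarrow> 0 \<le> bil_norm T"
  by (rule order_trans[OF norm_ge_zero bil_norm_upper[of T 0 0]]) simp_all

lemma bil_norm_least:
  assumes "\<And>b c. norm b \<le> 1 \<Longrightarrow> norm c \<le> 1 \<Longrightarrow> cmod (T b c) \<le> M"
  shows "bil_norm T \<le> M"
  unfolding bil_norm_def
proof (rule cSup_least)
  show "{cmod (T b c) |b c. norm b \<le> 1 \<and> norm c \<le> 1} \<noteq> {}"
    by (auto intro!: exI[of _ "0::'a"])
qed (use assms in blast)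

lemma bil_dual_scale: "T \<in> bil_dual \<Longrightarrow> (\<lambda>b c. z * T b c) \<in> bil_dual"
proof -
  assume "T \<in> bil_dual"
  then obtain K where K: "\<And>b c. cmod (T b c) \<le> K * norm b * norm c"
    and "\<And>b. clinear_functional (\<lambda>c. T b c)" "\<And>c. clinear_functional (\<lambda>b. T b c)"
    by (auto simp: bil_dual_def)
  moreover have "cmod (z * T b c) \<le> cmod z * K * norm b * norm c" for b c
    using mult_left_mono[OF K[of b c], of "cmod z"] by (simp add: norm_mult mult.assoc)
  ultimately show ?thesis
    by (intro bil_dualI[where K = "cmod z * K"]) (auto simp: clinear_functional_def algebra_simps)
qed

lemma tensor_form_in_bil_dual:
  assumes f: "f \<in> dual_space" and g: "g \<in> dual_space"
  shows "tensor_form f g \<in> bil_dual"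
proof -
  obtain K1 K2 where "\<And>x. cmod (f x) \<le> norm x * K1" "\<And>x. cmod (g x) \<le> norm x * K2"
    using dual_space_bounded_linear[OF f] dual_space_bounded_linear[OF g]
    by (meson bounded_linear.bounded)
  then have "cmod (f b) * cmod (g c) \<le> (norm b * K1) * (norm c * K2)" for b c
    by (meson mult_mono norm_ge_zero order_trans)
  moreover have "clinear_functional f" "clinear_functional g"
    using f g by (auto simp: dual_space_def)
  ultimately show ?thesis
    by (intro bil_dualI[where K = "K1 * K2"])
       (auto simp: tensor_form_def clinear_functional_def algebra_simps norm_mult)
qed

lemma bil_norm_tensor_form_le:
  assumes "f \<in> dual_space" "g \<in> dual_space"
  shows "bil_norm (tensor_form f g) \<le> dual_norm f * dual_norm g"
  using assms
  by (intro bil_norm_least)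
     (auto simp: tensor_form_def norm_mult intro!: mult_mono dual_norm_upper dual_norm_nonneg)

lemma mult_form_in_bil_dual:
  assumes f: "f \<in> dual_space"
  shows "(\<lambda>b c. f (b * c)) \<in> bil_dual"
proof -
  obtain K where K: "K > 0" "\<And>x. cmod (f x) \<le> norm x * K"
    using bounded_linear.pos_bounded[OF dual_space_bounded_linear[OF f]] by blast
  have "cmod (f (b * c)) \<le> K * norm b * norm c" for b c
  proof -
    have "cmod (f (b * c)) \<le> norm (b * c) * K"
      by (rule K(2))
    also have "\<dots> \<le> norm b * norm c * K"
      using K(1) by (intro mult_right_mono norm_mult_ineq) simp
    finally show ?thesis
      by (simp add: ac_simps)
  qed
  moreover have "clinear_functional f"
    using f by (simp add: dual_space_def)
  ultimately show ?thesis
    by (intro bil_dualI[where K = K])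
       (auto simp: clinear_functional_def distrib_left distrib_right mult_scaleC_left mult_scaleC_right)
qed

lemma bil_norm_mult_form_le:
  assumes "f \<in> dual_space"
  shows "bil_norm (\<lambda>b c. f (b * c)) \<le> dual_norm f"
proof (rule bil_norm_least)
  fix b c :: 'a assume "norm b \<le> 1" "norm c \<le> 1"
  then have "norm (b * c) \<le> 1"
    by (meson mult_le_one norm_ge_zero norm_mult_ineq order_trans)
  then show "cmod (f (b * c)) \<le> dual_norm f"
    by (rule dual_norm_upper[OF assms])
qed

lemma bil_bidual_add:
  "m \<in> bil_bidual \<Longrightarrow> S \<in> bil_dual \<Longrightarrow> T \<in> bil_dual \<Longrightarrow> m (\<lambda>b c. S b c + T b c) = m S + m T"
  by (simp add: bil_bidual_def)

lemma bil_bidual_scale: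
  "m \<in> bil_bidual \<Longrightarrow> T \<in> bil_dual \<Longrightarrow> m (\<lambda>b c. z * T b c) = z * m T"
  by (simp add: bil_bidual_def)

lemma bil_bidual_bound:
  assumes "m \<in> bil_bidual"
  obtains K where "K \<ge> 0" "\<And>T. T \<in> bil_dual \<Longrightarrow> cmod (m T) \<le> K * bil_norm T"
proof -
  obtain K where K: "\<And>T. T \<in> bil_dual \<Longrightarrow> cmod (m T) \<le> K * bil_norm T"
    using assms unfolding bil_bidual_def by blast
  have "cmod (m T) \<le> max K 0 * bil_norm T" if "T \<in> bil_dual" for T
    using K[OF that] mult_right_mono[OF max.cobounded1 bil_norm_nonneg[OF that], of K 0] by simp
  then show thesis
    using that[of "max K 0"] by simp
qed

lemma dual_Banach_algebra_representation:
  fixes \<Phi> :: "('a::complex_banach_algebra \<Rightarrow> complex) \<Rightarrow> complex"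
  assumes "dual_Banach_algebra Apre"
    and "\<And>f g. f \<in> Apre \<Longrightarrow> g \<in> Apre \<Longrightarrow> \<Phi> (\<lambda>x. f x + g x) = \<Phi> f + \<Phi> g"
    and "\<And>f c. f \<in> Apre \<Longrightarrow> \<Phi> (\<lambda>x. c * f x) = c * \<Phi> f"
    and "\<And>f. f \<in> Apre \<Longrightarrow> cmod (\<Phi> f) \<le> K * dual_norm f"
  shows "\<exists>a. \<forall>f\<in>Apre. \<Phi> f = f a"
proof -
  have "\<forall>\<Phi> :: ('a \<Rightarrow> complex) \<Rightarrow> complex.
        ((\<forall>f\<in>Apre. \<forall>g\<in>Apre. \<Phi> (\<lambda>x. f x + g x) = \<Phi> f + \<Phi> g)
         \<and> (\<forall>f\<in>Apre. \<forall>c. \<Phi> (\<lambda>x. c * f x) = c * \<Phi> f)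
         \<and> (\<exists>K. \<forall>f\<in>Apre. cmod (\<Phi> f) \<le> K * dual_norm f))
        \<longrightarrow> (\<exists>a. \<forall>f\<in>Apre. \<Phi> f = f a)"
    using assms(1) unfolding dual_Banach_algebra_def by (elim conjE)
  then show ?thesis
    using assms(2-4) by blast
qed

lemma predual_separates_points:
  assumes D: "dual_Banach_algebra Apre" and eq: "\<And>f. f \<in> Apre \<Longrightarrow> f x = f y"
  shows "x = y"
proof -
  have "f (x - y) = 0" if "f \<in> Apre" for f
  proof -
    have "linear f"
      using that dual_Banach_algebra_subset[OF D] by (auto simp: dual_space_def clinear_functional_linear)
    then show ?thesis
      using eq[OF that] by (simp add: linear_diff)
  qed
  moreover have "{cmod ((\<lambda>_. 0::complex) z) | z::'a. norm z \<le> 1} = {0}"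
    by (auto intro: exI[of _ 0])
  then have "dual_norm (\<lambda>_::'a. 0) \<le> 1"
    by (simp add: dual_norm_def)
  ultimately have "{cmod (f (x - y)) | f. f \<in> Apre \<and> dual_norm f \<le> 1} = {0}"
    using dual_Banach_algebra_zero[OF D] by force
  then show ?thesis
    using dual_Banach_algebra_norm[OF D, of "x - y"] by simp
qed

lemma diag_image_apply:
  assumes D: "dual_Banach_algebra Apre" and m: "m \<in> bil_bidual" and f: "f \<in> Apre"
  shows "f (diag_image Apre m) = m (\<lambda>b c. f (b * c))"
proof -
  have mult_form: "(\<lambda>b c. g (b * c)) \<in> bil_dual" if "g \<in> Apre" for g
    using that dual_Banach_algebra_subset[OF D] mult_form_in_bil_dual by blast
  obtain K where K: "K \<ge> 0" "\<And>T. T \<in> bil_dual \<Longrightarrow> cmod (m T) \<le> K * bil_norm T"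
    using bil_bidual_bound[OF m] by blast
  have "m (\<lambda>b c. g (b * c) + h (b * c)) = m (\<lambda>b c. g (b * c)) + m (\<lambda>b c. h (b * c))"
    if "g \<in> Apre" "h \<in> Apre" for g h
    using bil_bidual_add[OF m mult_form[OF that(1)] mult_form[OF that(2)]] by simp
  moreover have "m (\<lambda>b c. z * g (b * c)) = z * m (\<lambda>b c. g (b * c))" if "g \<in> Apre" for g z
    using bil_bidual_scale[OF m mult_form[OF that]] by simp
  moreover have "cmod (m (\<lambda>b c. g (b * c))) \<le> K * dual_norm g" if "g \<in> Apre" for g
  proof -
    have "g \<in> dual_space"
      using that dual_Banach_algebra_subset[OF D] by blast
    then show ?thesis
      using K(2)[OF mult_form[OF that]] mult_left_mono[OF bil_norm_mult_form_le K(1)] by fastforce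
  qed
  \<comment> \<open>g \<mapsto> m(g \<circ> \<pi>) is a bounded functional on the predual, hence evaluation at some point\<close>
  ultimately have "\<exists>x. \<forall>g\<in>Apre. m (\<lambda>b c. g (b * c)) = g x"
    by (rule dual_Banach_algebra_representation[OF D])
  then obtain x where x: "\<forall>g\<in>Apre. g x = m (\<lambda>b c. g (b * c))"
    by metis
  have "diag_image Apre m = x"
    unfolding diag_image_def
  proof (rule the_equality)
    fix y assume "\<forall>g\<in>Apre. g y = m (\<lambda>b c. g (b * c))"
    then show "y = x"
      using x by (intro predual_separates_points[OF D]) simp
  qed (rule x)
  then show ?thesis
    using x f by simp
qed

section \<open>Elementary tensors with a character\<close>

lemma bil_bidual_slice_in_bidual:
  assumes \<Phi>: "\<Phi> \<in> bil_bidual" and h: "h \<in> dual_space"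
  shows "(\<lambda>g. \<Phi> (tensor_form g h)) \<in> bidual_space"
proof -
  obtain K where K: "K \<ge> 0" "\<And>T. T \<in> bil_dual \<Longrightarrow> cmod (\<Phi> T) \<le> K * bil_norm T"
    using bil_bidual_bound[OF \<Phi>] by blast
  have "cmod (\<Phi> (tensor_form g h)) \<le> (K * dual_norm h) * dual_norm g" if g: "g \<in> dual_space" for g
    using K(2)[OF tensor_form_in_bil_dual[OF g h]]
      mult_left_mono[OF bil_norm_tensor_form_le[OF g h] K(1)]
    by (simp add: algebra_simps)
  moreover have "\<Phi> (tensor_form (\<lambda>x. f x + g x) h) = \<Phi> (tensor_form f h) + \<Phi> (tensor_form g h)"
    if "f \<in> dual_space" "g \<in> dual_space" for f g
  proof -
    have "tensor_form (\<lambda>x. f x + g x) h = (\<lambda>b c. tensor_form f h b c + tensor_form g h b c)"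
      by (simp add: tensor_form_def algebra_simps)
    then show ?thesis
      using bil_bidual_add[OF \<Phi> tensor_form_in_bil_dual[OF that(1) h] tensor_form_in_bil_dual[OF that(2) h]]
      by simp
  qed
  moreover have "\<Phi> (tensor_form (\<lambda>x. z * f x) h) = z * \<Phi> (tensor_form f h)"
    if "f \<in> dual_space" for f z
  proof -
    have "tensor_form (\<lambda>x. z * f x) h = (\<lambda>b c. z * tensor_form f h b c)"
      by (simp add: tensor_form_def algebra_simps)
    then show ?thesis
      using bil_bidual_scale[OF \<Phi> tensor_form_in_bil_dual[OF that h]] by simp
  qed
  ultimately show ?thesis
    unfolding bidual_space_def by blast
qed

lemma tact_r_tensor_form: "tact_r (tensor_form f g) a = tensor_form (fact_r f a) g"
  by (simp add: tact_r_def tensor_form_def fact_r_def)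

lemma tact_l_tensor_form_character:
  "character \<phi> \<Longrightarrow> tact_l a (tensor_form f \<phi>) = (\<lambda>b c. \<phi> a * tensor_form f \<phi> b c)"
  by (simp add: tact_l_def tensor_form_def character_def mult_ac)

lemma tensor_form_character_in_swc_bil_dual:
  assumes \<phi>: "weak_star_continuous_character Apre \<phi>" "\<phi> \<in> dual_space"
    and f: "f \<in> swc_dual Apre"
  shows "tensor_form f \<phi> \<in> swc_bil_dual Apre"
proof -
  have ch: "character \<phi>" and cont\<phi>: "continuous_map (weak_star_top Apre) euclidean \<phi>"
    using \<phi>(1) by (auto simp: weak_star_continuous_character_def)
  have fd: "f \<in> dual_space"
    and cont_r: "continuous_map (weak_star_top Apre)
                   (subtopology (weak_topology_by bidual_space) dual_space) (fact_r f)"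
    using f by (auto simp: swc_dual_def)
  have T: "tensor_form f \<phi> \<in> bil_dual"
    using tensor_form_in_bil_dual[OF fd \<phi>(2)] .
  have "continuous_map (weak_star_top Apre) euclidean (\<lambda>a. \<Phi> (tact_l a (tensor_form f \<phi>)))"
    if "\<Phi> \<in> bil_bidual" for \<Phi>
    using cont\<phi> bil_bidual_scale[OF that T]
    by (simp add: tact_l_tensor_form_character[OF ch] continuous_map_atin tendsto_mult)
  then have left: "continuous_map (weak_star_top Apre)
      (subtopology (weak_topology_by bil_bidual) bil_dual) (\<lambda>a. tact_l a (tensor_form f \<phi>))"
    using bil_dual_scale[OF T]
    by (auto simp: continuous_map_in_subtopology continuous_map_weak_topology_by_iff
        tact_l_tensor_form_character[OF ch])
  have "continuous_map (weak_star_top Apre) euclidean (\<lambda>a. \<Phi> (tact_r (tensor_form f \<phi>) a))"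
    if "\<Phi> \<in> bil_bidual" for \<Phi>
  proof -
    have "continuous_map (subtopology (weak_topology_by bidual_space) dual_space) euclidean
            (\<lambda>g. \<Phi> (tensor_form g \<phi>))"
      using bil_bidual_slice_in_bidual[OF that \<phi>(2)]
      by (intro continuous_map_from_subtopology continuous_map_weak_topology_by_eval)
    from continuous_map_compose[OF cont_r this] show ?thesis
      by (simp add: o_def tact_r_tensor_form)
  qed
  moreover have "fact_r f a \<in> dual_space" for a
    using cont_r by (auto simp: continuous_map_in_subtopology)
  ultimately have right: "continuous_map (weak_star_top Apre)
      (subtopology (weak_topology_by bil_bidual) bil_dual) (tact_r (tensor_form f \<phi>))"
    using tensor_form_in_bil_dual[OF _ \<phi>(2)]
    by (auto simp: continuous_map_in_subtopology continuous_map_weak_topology_by_iff tact_r_tensor_form)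
  show ?thesis
    unfolding swc_bil_dual_def using T left right by simp
qed

section \<open>The \<phi>-mean\<close>

lemma phi_Connes_amenableI:
  assumes \<phi>: "weak_star_continuous_character Apre \<phi>" "\<phi> \<in> dual_space"
    and m: "m \<in> bil_bidual"
    and diagonal: "\<And>a T. T \<in> swc_bil_dual Apre \<Longrightarrow> m (tact_r T a) = m (tact_l a T)"
    and nz: "m (tensor_form \<phi> \<phi>) \<noteq> 0"
  shows "phi_Connes_amenable Apre \<phi>"
proof -
  define d where "d = m (tensor_form \<phi> \<phi>)"
  define N where "N f = m (tensor_form f \<phi>) / d" for f
  have fd: "f \<in> dual_space" if "f \<in> swc_dual Apre" for f
    using that by (simp add: swc_dual_def)
  have Bf: "tensor_form f \<phi> \<in> bil_dual" if "f \<in> swc_dual Apre" for f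
    using tensor_form_in_bil_dual[OF fd[OF that] \<phi>(2)] .
  obtain K where K: "K \<ge> 0" "\<And>T. T \<in> bil_dual \<Longrightarrow> cmod (m T) \<le> K * bil_norm T"
    using bil_bidual_bound[OF m] by blast
  have "N (\<lambda>x. f x + g x) = N f + N g" if "f \<in> swc_dual Apre" "g \<in> swc_dual Apre" for f g
    using bil_bidual_add[OF m Bf[OF that(1)] Bf[OF that(2)]]
    by (simp add: N_def tensor_form_def distrib_right add_divide_distrib)
  moreover have "N (\<lambda>x. c * f x) = c * N f" if "f \<in> swc_dual Apre" for f c
    using bil_bidual_scale[OF m Bf[OF that]] by (simp add: N_def tensor_form_def mult.assoc)
  moreover have "cmod (N f) \<le> K * dual_norm \<phi> / cmod d * dual_norm f" if "f \<in> swc_dual Apre" for f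
  proof -
    have "cmod (m (tensor_form f \<phi>)) \<le> K * (dual_norm f * dual_norm \<phi>)"
      using K(2)[OF Bf[OF that]] mult_left_mono[OF bil_norm_tensor_form_le[OF fd[OF that] \<phi>(2)] K(1)]
      by linarith
    then show ?thesis
      by (simp add: N_def norm_divide divide_right_mono algebra_simps)
  qed
  moreover have "N (fact_r f a) = \<phi> a * N f" if "f \<in> swc_dual Apre" for f a
  proof -
    have "m (tensor_form (fact_r f a) \<phi>) = m (tact_l a (tensor_form f \<phi>))"
      using diagonal[OF tensor_form_character_in_swc_bil_dual[OF \<phi> that]]
      by (simp add: tact_r_tensor_form)
    also have "\<dots> = \<phi> a * m (tensor_form f \<phi>)"
      using \<phi>(1) bil_bidual_scale[OF m Bf[OF that]]
      by (simp add: weak_star_continuous_character_def tact_l_tensor_form_character)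
    finally show ?thesis by (simp add: N_def)
  qed
  moreover have "N \<phi> = 1"
    using nz by (simp add: N_def d_def)
  ultimately show ?thesis
    unfolding phi_Connes_amenable_def by blast
qed

lemma Johnson_pseudo_Connes_amenable_diagonal:
  assumes D: "dual_Banach_algebra Apre" and JPCA: "Johnson_pseudo_Connes_amenable Apre"
    and \<phi>: "character \<phi>" "\<phi> \<in> Apre"
  obtains m where "m \<in> bil_bidual"
    "\<And>a T. T \<in> swc_bil_dual Apre \<Longrightarrow> m (tact_r T a) = m (tact_l a T)"
    "m (tensor_form \<phi> \<phi>) \<noteq> 0"
proof -
  obtain F where F: "F \<noteq> bot"
    and ev: "\<forall>\<^sub>F m in F. m \<in> bil_bidual \<and> (\<forall>a. \<forall>T\<in>swc_bil_dual Apre. m (tact_r T a) = m (tact_l a T))"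
    and lim: "\<And>a. ((\<lambda>m. diag_image Apre m * a) \<longlongrightarrow> a) F"
    using JPCA unfolding Johnson_pseudo_Connes_amenable_def by blast
  obtain a0 where a0: "\<phi> a0 \<noteq> 0"
    using \<phi>(1) by (auto simp: character_def)
  have "bounded_linear \<phi>"
    using \<phi>(2) dual_Banach_algebra_subset[OF D] dual_space_bounded_linear by blast
  from bounded_linear.tendsto[OF this lim]
  have "\<forall>\<^sub>F m in F. \<phi> (diag_image Apre m * a0) \<noteq> 0"
    using a0 tendsto_imp_eventually_ne by blast
  then obtain m where m: "m \<in> bil_bidual"
    "\<And>a T. T \<in> swc_bil_dual Apre \<Longrightarrow> m (tact_r T a) = m (tact_l a T)"
    and "\<phi> (diag_image Apre m * a0) \<noteq> 0"
    using eventually_happens'[OF F eventually_conj[OF ev]] by blast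
  moreover have "\<phi> (diag_image Apre m) = m (tensor_form \<phi> \<phi>)"
    using diag_image_apply[OF D m(1) \<phi>(2)] \<phi>(1)
    by (simp add: tensor_form_def character_def)
  \<comment> \<open>by multiplicativity, \<phi>(\<pi>(m) a0) = \<phi>(\<pi>(m)) \<phi>(a0)\<close>
  ultimately show thesis
    using that \<phi>(1) by (simp add: character_def)
qed

theorem proposition2p7:
  fixes Apre :: "('a::complex_banach_algebra \<Rightarrow> complex) set"
    and \<phi> :: "'a \<Rightarrow> complex"
  assumes "dual_Banach_algebra Apre"
    and "weak_star_continuous_character Apre \<phi>"
    and "Johnson_pseudo_Connes_amenable Apre"
  shows "phi_Connes_amenable Apre \<phi>"
proof -
  have ch: "character \<phi>"
    using assms(2) by (simp add: weak_star_continuous_character_def)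
  have \<phi>_predual: "\<phi> \<in> Apre"
    using assms(1,2) weak_star_continuous_functional_mem_predual
    by (auto simp: weak_star_continuous_character_def character_def)
  obtain m where "m \<in> bil_bidual"
    "\<And>a T. T \<in> swc_bil_dual Apre \<Longrightarrow> m (tact_r T a) = m (tact_l a T)"
    "m (tensor_form \<phi> \<phi>) \<noteq> 0"
    using Johnson_pseudo_Connes_amenable_diagonal[OF assms(1,3) ch \<phi>_predual] by blast
  then show ?thesis
    using phi_Connes_amenableI[OF assms(2)] \<phi>_predual dual_Banach_algebra_subset[OF assms(1)]
    by blast
qed

end
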